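(* Suppose $p_{XY}$ has full support on $\mathcal{X}\times\mathcal{Y}$ and there exists a joint p.m.f. $p(u,x,y,z)=p_{XY}(x,y)p_{Z|XY}(z|x,y)p(u|x,y,z)$ (with $U$ on a finite set) satisfying the Markov chains $U-X-Y$, $Z-(U,Y)-X$ and $U-(Y,Z)-X$. Then for all $y,y'\in\mathcal{Y}$, $k(y)=k(y')$ and $\{\vec\alpha_1^{(y)},\dots,\vec\alpha_{k(y)}^{(y)}\}=\{\vec\alpha_1^{(y')},\dots,\vec\alpha_{k(y')}^{(y')}\}$.
   Context: $\mathcal{X},\mathcal{Y},\mathcal{Z}$ are finite. For $y\in\mathcal{Y}$ let $\mathcal{Z}^{(y)}=\{z\in\mathcal{Z}:\exists x,\ p_{Z|XY}(z|x,y)>0\}$. For $z,z'\in\mathcal{Z}^{(y)}$, write $z\equiv_y z'$ if the column vectors $(p_{Z|XY}(z|x,y))_{x\in\mathcal{X}}$ and $(p_{Z|XY}(z'|x,y))_{x\in\mathcal{X}}$ are positive scalar multiples of each other; this is an equivalence relation partitioning $\mathcal{Z}^{(y)}=\mathcal{Z}_1^{(y)}\uplus\cdots\uplus\mathcal{Z}_{k(y)}^{(y)}$. For each class, the $|\mathcal{X}|\times|\mathcal{Z}_i^{(y)}|$ matrix $A_i^{(y)}(x,z)=p_{Z|XY}(z|x,y)$ is rank one and can be uniquely written as $A_i^{(y)}(x,z)=\vec\alpha_i^{(y)}(x)\vec\gamma_i^{(y)}(z)$ with $\vec\alpha_i^{(y)}$ a probability vector on $\mathcal{X}$. *)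

theory Defs
  imports Complex_Main
begin

text \<open>Finite alphabets are modelled by finite types. The channel p_{Z|XY} is W x y z.\<close>

definition Zsupp :: "('x::finite \<Rightarrow> 'y \<Rightarrow> 'z::finite \<Rightarrow> real) \<Rightarrow> 'y \<Rightarrow> 'z set" where
  "Zsupp W y = {z. \<exists>x. W x y z > 0}"

definition zequiv :: "('x::finite \<Rightarrow> 'y \<Rightarrow> 'z::finite \<Rightarrow> real) \<Rightarrow> 'y \<Rightarrow> ('z \<times> 'z) set" where
  "zequiv W y = {(z, z'). z \<in> Zsupp W y \<and> z' \<in> Zsupp W y \<and>
                   (\<exists>c>0. \<forall>x. W x y z = c * W x y z')}"

definition zclasses :: "('x::finite \<Rightarrow> 'y \<Rightarrow> 'z::finite \<Rightarrow> real) \<Rightarrow> 'y \<Rightarrow> 'z set set" where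
  "zclasses W y = Zsupp W y // zequiv W y"

definition kcount :: "('x::finite \<Rightarrow> 'y \<Rightarrow> 'z::finite \<Rightarrow> real) \<Rightarrow> 'y \<Rightarrow> nat" where
  "kcount W y = card (zclasses W y)"

definition prob_vec :: "('a::finite \<Rightarrow> real) \<Rightarrow> bool" where
  "prob_vec a \<longleftrightarrow> (\<forall>x. a x \<ge> 0) \<and> (\<Sum>x\<in>UNIV. a x) = 1"

definition alpha_of :: "('x::finite \<Rightarrow> 'y \<Rightarrow> 'z::finite \<Rightarrow> real) \<Rightarrow> 'y \<Rightarrow> 'z set \<Rightarrow> ('x \<Rightarrow> real)" where
  "alpha_of W y C = (THE a. prob_vec a \<and> (\<exists>g :: 'z \<Rightarrow> real. \<forall>x. \<forall>z\<in>C. W x y z = a x * g z))"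

definition alphas :: "('x::finite \<Rightarrow> 'y \<Rightarrow> 'z::finite \<Rightarrow> real) \<Rightarrow> 'y \<Rightarrow> ('x \<Rightarrow> real) set" where
  "alphas W y = alpha_of W y ` zclasses W y"

definition joint :: "('x \<Rightarrow> 'y \<Rightarrow> real) \<Rightarrow> ('x \<Rightarrow> 'y \<Rightarrow> 'z \<Rightarrow> real) \<Rightarrow> ('x \<Rightarrow> 'y \<Rightarrow> 'z \<Rightarrow> 'u \<Rightarrow> real)
    \<Rightarrow> 'u \<Rightarrow> 'x \<Rightarrow> 'y \<Rightarrow> 'z \<Rightarrow> real" where
  "joint pXY W Q u x y z = pXY x y * W x y z * Q x y z u"

text \<open>Markov chain A - B - C for a pmf P(a,b,c) on finite sets:
  p(a,b,c) p(b) = p(a,b) p(b,c) for all a b c.\<close>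
definition markov3 :: "('a::finite \<Rightarrow> 'b::finite \<Rightarrow> 'c::finite \<Rightarrow> real) \<Rightarrow> bool" where
  "markov3 P \<longleftrightarrow> (\<forall>a b c.
      P a b c * (\<Sum>a'\<in>UNIV. \<Sum>c'\<in>UNIV. P a' b c') = (\<Sum>c'\<in>UNIV. P a b c') * (\<Sum>a'\<in>UNIV. P a' b c))"

end

theory Submission
  imports Defs
begin

text \<open>
  The three Markov chains factor the joint law. By U - (Y,Z) - X the test channel depends on
  (y, z) only, p(u|x,y,z) = q(u|y,z); by U - X - Y the mixture sum_z W(z|x,y) q(u|y,z) = r(u|x)
  does not depend on y; and by Z - (U,Y) - X, W(z|x,y) q(u|y,z) = G(u,y,z) r(u|x).
  So every column W(\<cdot>|y,z) with q(u|y,z) \<noteq> 0 is a multiple of r(u|\<cdot>), and every nonzero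
  r(u|\<cdot>) arises in this way. Hence for each y the normalized columns, which are exactly the
  vectors alpha_i^(y), form the set of normalized nonzero r(u|\<cdot>), independent of y; and since distinct
  classes have distinct normalized columns, k(y) is the size of that set.
\<close>

definition normalized :: "('a::finite \<Rightarrow> real) \<Rightarrow> 'a \<Rightarrow> real" where
  "normalized v = (\<lambda>x. v x / (\<Sum>x'\<in>UNIV. v x'))"

lemma normalized_scale:
  assumes "c \<noteq> 0"
  shows "normalized (\<lambda>x. c * v x) = normalized v"
  using assms by (auto simp: normalized_def fun_eq_iff sum_distrib_left[symmetric])

lemma prob_vec_normalized:
  assumes "\<And>x. v x \<ge> 0" and "(\<Sum>x\<in>UNIV. v x) > 0"
  shows "prob_vec (normalized v)"
  using assms by (auto simp: prob_vec_def normalized_def sum_divide_distrib[symmetric])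

lemma normalized_eq_imp_proportional:
  assumes "(\<Sum>x\<in>UNIV. v x) > 0" and "(\<Sum>x\<in>UNIV. w x) > 0"
    and "normalized v = normalized w"
  shows "v x = (\<Sum>x\<in>UNIV. v x) / (\<Sum>x\<in>UNIV. w x) * w x"
proof -
  have "v x / (\<Sum>x\<in>UNIV. v x) = w x / (\<Sum>x\<in>UNIV. w x)"
    using assms(3) unfolding normalized_def by metis
  with assms(1,2) show ?thesis by (simp add: field_simps)
qed

lemma column_sum_pos:
  assumes "\<And>x z. W x y z \<ge> 0" and "z \<in> Zsupp W y"
  shows "(\<Sum>x\<in>UNIV. W x y z) > 0"
proof -
  obtain x0 where "W x0 y z > 0" using assms(2) by (auto simp: Zsupp_def)
  then show ?thesis by (intro sum_pos2[of UNIV x0]) (auto simp: assms(1))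
qed

lemma equiv_zequiv: "equiv (Zsupp W y) (zequiv W y)"
proof (rule equivI)
  show "zequiv W y \<subseteq> Zsupp W y \<times> Zsupp W y"
    unfolding zequiv_def by auto
  show "refl_on (Zsupp W y) (zequiv W y)"
    unfolding refl_on_def zequiv_def by (auto intro: exI[of _ 1])
  show "sym (zequiv W y)"
  proof (rule symI)
    fix z z' assume "(z, z') \<in> zequiv W y"
    then obtain c where "z \<in> Zsupp W y" "z' \<in> Zsupp W y" "c > 0" "\<forall>x. W x y z = c * W x y z'"
      by (auto simp: zequiv_def)
    then show "(z', z) \<in> zequiv W y" unfolding zequiv_def by (auto intro!: exI[of _ "1 / c"])
  qed
  show "trans (zequiv W y)"
  proof (rule transI)
    fix z z' z'' assume "(z, z') \<in> zequiv W y" "(z', z'') \<in> zequiv W y"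
    then obtain c d where "z \<in> Zsupp W y" "z'' \<in> Zsupp W y" "c > 0" "d > 0"
      "\<forall>x. W x y z = c * W x y z'" "\<forall>x. W x y z' = d * W x y z''"
      by (auto simp: zequiv_def)
    then show "(z, z'') \<in> zequiv W y" unfolding zequiv_def by (auto intro!: exI[of _ "c * d"])
  qed
qed

lemma zequiv_iff_normalized_eq:
  assumes "\<And>x z. W x y z \<ge> 0" and "z \<in> Zsupp W y" and "z' \<in> Zsupp W y"
  shows "(z, z') \<in> zequiv W y \<longleftrightarrow> normalized (\<lambda>x. W x y z) = normalized (\<lambda>x. W x y z')"
proof
  assume "(z, z') \<in> zequiv W y"
  then obtain c where "c > 0" "\<And>x. W x y z = c * W x y z'"
    by (auto simp: zequiv_def)
  then show "normalized (\<lambda>x. W x y z) = normalized (\<lambda>x. W x y z')"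
    using normalized_scale[of c "\<lambda>x. W x y z'"] by simp
next
  assume "normalized (\<lambda>x. W x y z) = normalized (\<lambda>x. W x y z')"
  moreover have "(\<Sum>x\<in>UNIV. W x y z) > 0" "(\<Sum>x\<in>UNIV. W x y z') > 0"
    using column_sum_pos[of W y] assms by auto
  ultimately show "(z, z') \<in> zequiv W y"
    using assms(2,3) unfolding zequiv_def
    by (auto intro!: exI[of _ "(\<Sum>x\<in>UNIV. W x y z) / (\<Sum>x\<in>UNIV. W x y z')"]
        normalized_eq_imp_proportional)
qed

lemma alpha_of_class:
  assumes nonneg: "\<And>x z. W x y z \<ge> 0" and z: "z \<in> Zsupp W y"
  shows "alpha_of W y (zequiv W y `` {z}) = normalized (\<lambda>x. W x y z)"
  unfolding alpha_of_def
proof (rule the_equality)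
  have s: "(\<Sum>x\<in>UNIV. W x y z) > 0" by (rule column_sum_pos[OF nonneg z])
  have "W x y z' = normalized (\<lambda>x. W x y z) x * (\<Sum>x\<in>UNIV. W x y z')"
    if "z' \<in> zequiv W y `` {z}" for x z'
  proof -
    from that have zz': "(z, z') \<in> zequiv W y" by simp
    then have "z' \<in> Zsupp W y" by (simp add: zequiv_def)
    moreover have "normalized (\<lambda>x. W x y z') = normalized (\<lambda>x. W x y z)"
      using zequiv_iff_normalized_eq[of W y, OF nonneg z \<open>z' \<in> Zsupp W y\<close>] zz' by simp
    ultimately have "W x y z' = (\<Sum>x\<in>UNIV. W x y z') / (\<Sum>x\<in>UNIV. W x y z) * W x y z"
      using normalized_eq_imp_proportional column_sum_pos[of W y, OF nonneg] s by blast
    then show ?thesis by (simp add: normalized_def)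
  qed
  then show "prob_vec (normalized (\<lambda>x. W x y z)) \<and>
      (\<exists>g. \<forall>x. \<forall>z'\<in>zequiv W y `` {z}. W x y z' = normalized (\<lambda>x. W x y z) x * g z')"
    using prob_vec_normalized[of "\<lambda>x. W x y z", OF nonneg s]
    by (intro conjI exI[of _ "\<lambda>z'. \<Sum>x\<in>UNIV. W x y z'"]) auto
next
  fix a assume a: "prob_vec a \<and> (\<exists>g. \<forall>x. \<forall>z'\<in>zequiv W y `` {z}. W x y z' = a x * g z')"
  have "z \<in> zequiv W y `` {z}"
    using equiv_zequiv z by (rule equiv_class_self)
  with a obtain g where g: "\<And>x. W x y z = a x * g z" by blast
  with a have "(\<Sum>x\<in>UNIV. W x y z) = g z"
    by (simp add: prob_vec_def sum_distrib_right[symmetric])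
  with g show "a = normalized (\<lambda>x. W x y z)"
    using column_sum_pos[OF nonneg z] by (auto simp: normalized_def fun_eq_iff)
qed

lemma alphas_eq_normalized_columns:
  assumes "\<And>x z. W x y z \<ge> 0"
  shows "alphas W y = (\<lambda>z. normalized (\<lambda>x. W x y z)) ` Zsupp W y"
  using alpha_of_class[of W y, OF assms]
  by (auto simp: alphas_def zclasses_def quotient_def image_iff)

lemma kcount_eq_card_alphas:
  assumes nonneg: "\<And>x z. W x y z \<ge> 0"
  shows "kcount W y = card (alphas W y)"
proof -
  have "inj_on (alpha_of W y) (zclasses W y)"
  proof (rule inj_onI)
    fix C C' assume "C \<in> zclasses W y" "C' \<in> zclasses W y"
      and eq: "alpha_of W y C = alpha_of W y C'"
    then obtain z z' where z: "z \<in> Zsupp W y" "C = zequiv W y `` {z}"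
      and z': "z' \<in> Zsupp W y" "C' = zequiv W y `` {z'}"
      by (auto simp: zclasses_def elim!: quotientE)
    with eq have "(z, z') \<in> zequiv W y"
      using alpha_of_class[of W y, OF nonneg] zequiv_iff_normalized_eq[of W y, OF nonneg] by simp
    with z z' show "C = C'" using equiv_class_eq[OF equiv_zequiv] by simp
  qed
  then show ?thesis by (simp add: kcount_def alphas_def card_image)
qed

lemma normalized_columns_eq_if_factorization:
  fixes W :: "'x::finite \<Rightarrow> 'y \<Rightarrow> 'z::finite \<Rightarrow> real"
    and q G :: "'u \<Rightarrow> 'z \<Rightarrow> real" and r :: "'u \<Rightarrow> 'x \<Rightarrow> real"
  assumes nonneg: "\<And>x z. W x y z \<ge> 0"
    and factor: "\<And>u x z. W x y z * q u z = G u z * r u x"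
    and marginal: "\<And>u x. (\<Sum>z\<in>UNIV. W x y z * q u z) = r u x"
    and covered: "\<And>z. z \<in> Zsupp W y \<Longrightarrow> \<exists>u. q u z \<noteq> 0"
  shows "(\<lambda>z. normalized (\<lambda>x. W x y z)) ` Zsupp W y = {normalized (r u) | u. r u \<noteq> (\<lambda>x. 0)}"
proof -
  have aligned: "normalized (\<lambda>x. W x y z) = normalized (r u) \<and> r u \<noteq> (\<lambda>x. 0)"
    if nz: "W x0 y z * q u z \<noteq> 0" for x0 z u
  proof -
    have "q u z \<noteq> 0" "G u z \<noteq> 0" "r u x0 \<noteq> 0" using nz factor[of x0 z u] by auto
    moreover have "(\<lambda>x. W x y z) = (\<lambda>x. G u z / q u z * r u x)"
      using factor \<open>q u z \<noteq> 0\<close> by (auto simp: fun_eq_iff field_simps)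
    ultimately show ?thesis
      using nz normalized_scale[of "G u z / q u z" "r u"] by (auto simp: fun_eq_iff)
  qed
  show ?thesis
  proof (intro equalityI subsetI)
    fix a assume "a \<in> (\<lambda>z. normalized (\<lambda>x. W x y z)) ` Zsupp W y"
    then obtain z x0 where "a = normalized (\<lambda>x. W x y z)" "z \<in> Zsupp W y" "W x0 y z > 0"
      by (auto simp: Zsupp_def)
    moreover obtain u where "q u z \<noteq> 0" using covered \<open>z \<in> Zsupp W y\<close> by blast
    ultimately show "a \<in> {normalized (r u) | u. r u \<noteq> (\<lambda>x. 0)}"
      using aligned[of x0 z u] by auto
  next
    fix a assume "a \<in> {normalized (r u) | u. r u \<noteq> (\<lambda>x. 0)}"
    then obtain u x0 where a: "a = normalized (r u)" and "r u x0 \<noteq> 0" by (auto simp: fun_eq_iff)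
    then obtain z where nz: "W x0 y z * q u z \<noteq> 0"
      using marginal[of x0 u] by (metis (mono_tags, lifting) sum.neutral)
    then have "z \<in> Zsupp W y"
      using nonneg[of x0 z] by (fastforce simp: Zsupp_def less_le)
    with a aligned[OF nz] show "a \<in> (\<lambda>z. normalized (\<lambda>x. W x y z)) ` Zsupp W y"
      by (metis image_eqI)
  qed
qed

text \<open>If P(b) = 0 then P(\<cdot>, b, \<cdot>) vanishes and the right-hand side is 0 by x / 0 = 0.\<close>

lemma markov3_factorization:
  fixes P :: "'a::finite \<Rightarrow> 'b::finite \<Rightarrow> 'c::finite \<Rightarrow> real"
  assumes "markov3 P" and nonneg: "\<And>a b c. P a b c \<ge> 0"
  shows "P a b c = (\<Sum>c'\<in>UNIV. P a b c') * (\<Sum>a'\<in>UNIV. P a' b c) / (\<Sum>a'\<in>UNIV. \<Sum>c'\<in>UNIV. P a' b c')"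
proof (cases "(\<Sum>a'\<in>UNIV. \<Sum>c'\<in>UNIV. P a' b c') = 0")
  case True
  then have "P a b c = 0"
    using nonneg by (simp add: sum_nonneg_eq_0_iff sum_nonneg)
  with True show ?thesis by simp
next
  case False
  with \<open>markov3 P\<close> show ?thesis
    unfolding markov3_def by (simp add: field_simps)
qed

context
  fixes pXY :: "'x::finite \<Rightarrow> 'y::finite \<Rightarrow> real"
    and W :: "'x \<Rightarrow> 'y \<Rightarrow> 'z::finite \<Rightarrow> real"
    and Q :: "'x \<Rightarrow> 'y \<Rightarrow> 'z \<Rightarrow> 'u::finite \<Rightarrow> real"
  assumes pXY_nonneg: "\<And>x y. pXY x y \<ge> 0"
    and W_nonneg: "\<And>x y z. W x y z \<ge> 0"
    and W_sum: "\<And>x y. (\<Sum>z\<in>UNIV. W x y z) = 1"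
    and Q_nonneg: "\<And>x y z u. Q x y z u \<ge> 0"
    and Q_sum: "\<And>x y z. (\<Sum>u\<in>UNIV. Q x y z u) = 1"
begin

lemma joint_nonneg: "joint pXY W Q u x y z \<ge> 0"
  by (simp add: joint_def pXY_nonneg W_nonneg Q_nonneg)

lemma sum_joint_U: "(\<Sum>u\<in>UNIV. joint pXY W Q u x y z) = pXY x y * W x y z"
  by (simp add: joint_def Q_sum flip: sum_distrib_left)

lemma sum_joint_UZ: "(\<Sum>u\<in>UNIV. \<Sum>z\<in>UNIV. joint pXY W Q u x y z) = pXY x y"
  by (subst sum.swap) (simp add: sum_joint_U W_sum flip: sum_distrib_left)

lemma joint_backward_channel:
  assumes "markov3 (\<lambda>u (y, z) x. joint pXY W Q u x y z)"
  obtains q where "\<And>u x y z. joint pXY W Q u x y z = pXY x y * W x y z * q u y z"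
proof
  fix u x y z
  show "joint pXY W Q u x y z = pXY x y * W x y z *
      ((\<Sum>x'\<in>UNIV. joint pXY W Q u x' y z) / (\<Sum>u'\<in>UNIV. \<Sum>x'\<in>UNIV. joint pXY W Q u' x' y z))"
    using markov3_factorization[OF assms, of u "(y, z)" x] joint_nonneg
    by (simp add: sum_joint_U split_beta mult_ac)
qed

lemma joint_input_channel:
  assumes "markov3 (\<lambda>u x y. \<Sum>z\<in>UNIV. joint pXY W Q u x y z)"
  obtains r where "\<And>u x y. (\<Sum>z\<in>UNIV. joint pXY W Q u x y z) = pXY x y * r u x"
proof
  fix u x y
  have "(\<Sum>u'\<in>UNIV. \<Sum>y'\<in>UNIV. \<Sum>z\<in>UNIV. joint pXY W Q u' x y' z) = (\<Sum>y'\<in>UNIV. pXY x y')"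
    by (subst sum.swap) (simp add: sum_joint_UZ)
  then show "(\<Sum>z\<in>UNIV. joint pXY W Q u x y z) = pXY x y *
      ((\<Sum>y'\<in>UNIV. \<Sum>z\<in>UNIV. joint pXY W Q u x y' z) / (\<Sum>y'\<in>UNIV. pXY x y'))"
    using markov3_factorization[OF assms, of u x y] joint_nonneg
    by (simp add: sum_nonneg sum_joint_UZ)
qed

lemma joint_output_factor:
  assumes "markov3 (\<lambda>z (u, y) x. joint pXY W Q u x y z)"
    and r: "\<And>u x y. (\<Sum>z\<in>UNIV. joint pXY W Q u x y z) = pXY x y * r u x"
  obtains G where "\<And>u x y z. joint pXY W Q u x y z = pXY x y * r u x * G u y z"
proof
  fix u x y z
  show "joint pXY W Q u x y z = pXY x y * r u x *
      ((\<Sum>x'\<in>UNIV. joint pXY W Q u x' y z) / (\<Sum>z'\<in>UNIV. \<Sum>x'\<in>UNIV. joint pXY W Q u x' y z'))"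
    using markov3_factorization[OF assms(1), of z "(u, y)" x] joint_nonneg
    by (simp add: r split_beta mult_ac)
qed

lemma channel_factorization:
  assumes pXY_pos: "\<And>x y. pXY x y > 0"
    and M1: "markov3 (\<lambda>u x y. \<Sum>z\<in>UNIV. joint pXY W Q u x y z)"
    and M2: "markov3 (\<lambda>z (u, y) x. joint pXY W Q u x y z)"
    and M3: "markov3 (\<lambda>u (y, z) x. joint pXY W Q u x y z)"
  obtains q G :: "'u \<Rightarrow> 'y \<Rightarrow> 'z \<Rightarrow> real" and r :: "'u \<Rightarrow> 'x \<Rightarrow> real"
  where "\<And>u x y z. W x y z * q u y z = G u y z * r u x"
    and "\<And>u x y. (\<Sum>z\<in>UNIV. W x y z * q u y z) = r u x"
    and "\<And>y z. z \<in> Zsupp W y \<Longrightarrow> \<exists>u. q u y z \<noteq> 0"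
proof -
  obtain q where q: "\<And>u x y z. joint pXY W Q u x y z = pXY x y * W x y z * q u y z"
    using joint_backward_channel[OF M3] by blast
  obtain r where r: "\<And>u x y. (\<Sum>z\<in>UNIV. joint pXY W Q u x y z) = pXY x y * r u x"
    using joint_input_channel[OF M1] by blast
  obtain G where G: "\<And>u x y z. joint pXY W Q u x y z = pXY x y * r u x * G u y z"
    using joint_output_factor[OF M2 r] by blast
  have factor: "W x y z * q u y z = G u y z * r u x" for u x y z
  proof -
    have "pXY x y * (W x y z * q u y z) = pXY x y * (G u y z * r u x)"
      using q[of u x y z] G[of u x y z] by (metis mult.assoc mult.commute)
    then show ?thesis using pXY_pos[of x y] by (metis less_irrefl mult_left_cancel)
  qed
  have "pXY x y * (\<Sum>z\<in>UNIV. W x y z * q u y z) = pXY x y * r u x" for u x y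
    using r[of u x y] by (simp add: q sum_distrib_left mult_ac)
  then have marginal: "(\<Sum>z\<in>UNIV. W x y z * q u y z) = r u x" for u x y
    using pXY_pos[of x y] by (metis less_irrefl mult_left_cancel)
  have covered: "\<exists>u. q u y z \<noteq> 0" if z: "z \<in> Zsupp W y" for y z
  proof -
    obtain x where "W x y z > 0" using z by (auto simp: Zsupp_def)
    then have "Q x y z u = q u y z" for u
      using q[of u x y z] pXY_pos[of x y] by (simp add: joint_def)
    moreover obtain u where "Q x y z u \<noteq> 0"
      using Q_sum[of x y z] by force
    ultimately show ?thesis by metis
  qed
  from factor marginal covered show thesis by (rule that)
qed

end

theorem claim2:
  fixes pXY :: "'x::finite \<Rightarrow> 'y::finite \<Rightarrow> real"
    and W :: "'x \<Rightarrow> 'y \<Rightarrow> 'z::finite \<Rightarrow> real"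
    and Q :: "'x \<Rightarrow> 'y \<Rightarrow> 'z \<Rightarrow> 'u::finite \<Rightarrow> real"
  assumes pXY_pos: "\<forall>x y. pXY x y > 0"
    and pXY_sum: "(\<Sum>x\<in>UNIV. \<Sum>y\<in>UNIV. pXY x y) = 1"
    and W_nonneg: "\<forall>x y z. W x y z \<ge> 0"
    and W_sum: "\<forall>x y. (\<Sum>z\<in>UNIV. W x y z) = 1"
    and Q_nonneg: "\<forall>x y z u. Q x y z u \<ge> 0"
    and Q_sum: "\<forall>x y z. (\<Sum>u\<in>UNIV. Q x y z u) = 1"
    and M1: "markov3 (\<lambda>u x y. \<Sum>z\<in>UNIV. joint pXY W Q u x y z)"
    and M2: "markov3 (\<lambda>z (u, y) x. joint pXY W Q u x y z)"
    and M3: "markov3 (\<lambda>u (y, z) x. joint pXY W Q u x y z)"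
  shows "\<forall>y y'. kcount W y = kcount W y' \<and> alphas W y = alphas W y'"
proof -
  have pos: "\<And>x y. pXY x y > 0" and nonneg: "\<And>x y. pXY x y \<ge> 0"
    using pXY_pos less_imp_le by blast+
  have stochastic: "\<And>x y z. W x y z \<ge> 0" "\<And>x y. (\<Sum>z\<in>UNIV. W x y z) = 1"
    "\<And>x y z u. Q x y z u \<ge> 0" "\<And>x y z. (\<Sum>u\<in>UNIV. Q x y z u) = 1"
    using W_nonneg W_sum Q_nonneg Q_sum by blast+
  note channel = channel_factorization[of pXY W Q, OF nonneg stochastic pos M1 M2 M3]
  obtain q G :: "'u \<Rightarrow> 'y \<Rightarrow> 'z \<Rightarrow> real" and r :: "'u \<Rightarrow> 'x \<Rightarrow> real"
    where factor: "\<And>u x y z. W x y z * q u y z = G u y z * r u x"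
    and marginal: "\<And>u x y. (\<Sum>z\<in>UNIV. W x y z * q u y z) = r u x"
    and covered: "\<And>y z. z \<in> Zsupp W y \<Longrightarrow> \<exists>u. q u y z \<noteq> 0"
    by (rule channel) (rule that)
  have "alphas W y = {normalized (r u) | u. r u \<noteq> (\<lambda>x. 0)}" for y
    using alphas_eq_normalized_columns[of W y] W_nonneg
      normalized_columns_eq_if_factorization[of W y "\<lambda>u. q u y" "\<lambda>u. G u y" r]
      factor marginal covered
    by simp
  then show ?thesis
    using kcount_eq_card_alphas[of W] W_nonneg by simp
qed

end
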